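(* Let $(X_1,Y_1),\dots,(X_n,Y_n)$ be calibration data and $X_{n+1},\dots,X_{n+m}$ test covariates (with unobserved $Y_{n+j}$), $Y_i\in\mathbb{R}$, $s:\mathcal{X}\to[0,1]$ a score, $c\in\mathbb{R}$ a constant, and suppose the risk is binary: $\mathcal{L}(f,x,y)=\mathbf{1}\{y\le c\}$, $L_i=\mathbf{1}\{Y_i\le c\}$. Fix $\alpha\in(0,1)$ and take $\gamma=\alpha$ in the SCoRE e-values. Then for every $j\in\{1,\dots,m\}$, deterministically $E_{\alpha,n+j}(1)\ge e_{n+j}$; furthermore, $e_{n+j}=0$ implies $E_{\alpha,n+j}=0$.
   Context: Let $\mathcal{M}=\{s(X_i)\}_{i=1}^{n+m}$. For $t\in\mathbb{R}$, $\ell\in[0,1]$: $\mathrm{FR}_{n+j}(t;\ell)=\frac{\ell\mathbf{1}\{s(X_{n+j})\le t\}+\sum_{i=1}^nL_i\mathbf{1}\{s(X_i)\le t\}}{1+\sum_{k\ne j}\mathbf{1}\{s(X_{n+k})\le t\}}\cdot\frac{m}{n+1}$, $t_{\gamma,n+j}(\ell)=\max\{t\in\mathcal{M}:\mathrm{FR}_{n+j}(t;\ell)\le\gamma\}$ ($\max\emptyset=-\infty$), $$E_{\gamma,n+j}(\ell)=\frac{(n+1)\mathbf{1}\{s(X_{n+j})\le t_{\gamma,n+j}(\ell)\}}{\ell\mathbf{1}\{s(X_{n+j})\le t_{\gamma,n+j}(\ell)\}+\sum_{i=1}^nL_i\mathbf{1}\{s(X_i)\le t_{\gamma,n+j}(\ell)\}}$$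 (ratio $0$ if numerator $0$), and $E_{\gamma,n+j}=\inf_{\ell\in[0,1]}E_{\gamma,n+j}(\ell)$ (set to $0$ if $\inf_\ell t_{\gamma,n+j}(\ell)=-\infty$). Conformal p-values: with $V(x,y)=\infty\cdot\mathbf{1}\{y>c\}+s(x)$ (where $\infty\cdot0=0$), $p_j=\frac{1+\sum_{i=1}^n\mathbf{1}\{V(X_i,Y_i)\le V(X_{n+j},c)\}}{n+1}$. Let $\mathcal{S}^{\mathrm{CS}}$ be the output of the Benjamini–Hochberg procedure at level $\alpha$ applied to $p_1,\dots,p_m$ (i.e. with $k^*=\max\{k:p_{(k)}\le\alpha k/m\}$, or $0$ if none, $\mathcal{S}^{\mathrm{CS}}=\{j:p_j\le\alpha k^*/m\}$), and $e_{n+j}=\frac{\mathbf{1}\{p_j\le\alpha|\mathcal{S}^{\mathrm{CS}}|/m\}}{\alpha|\mathcal{S}^{\mathrm{CS}}|/m}$ (taken as $0$ when the indicator is $0$). *)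

theory Defs
  imports Complex_Main "HOL-Library.Extended_Real"
begin

definition ind :: "bool \<Rightarrow> real" where
  "ind b = (if b then 1 else 0)"

definition scoreset :: "nat \<Rightarrow> nat \<Rightarrow> (nat \<Rightarrow> 'x) \<Rightarrow> ('x \<Rightarrow> real) \<Rightarrow> real set" where
  "scoreset n m X s = (\<lambda>i. s (X i)) ` {1..n+m}"

definition FR :: "nat \<Rightarrow> nat \<Rightarrow> (nat \<Rightarrow> 'x) \<Rightarrow> (nat \<Rightarrow> real) \<Rightarrow> ('x \<Rightarrow> real)
                   \<Rightarrow> nat \<Rightarrow> real \<Rightarrow> real \<Rightarrow> real" where
  "FR n m X L s j t l =
     (l * ind (s (X (n+j)) \<le> t) + (\<Sum>i=1..n. L i * ind (s (X i) \<le> t)))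
     / (1 + real (card {k\<in>{1..m}. k \<noteq> j \<and> s (X (n+k)) \<le> t}))
     * (real m / real (n+1))"

definition thr :: "nat \<Rightarrow> nat \<Rightarrow> (nat \<Rightarrow> 'x) \<Rightarrow> (nat \<Rightarrow> real) \<Rightarrow> ('x \<Rightarrow> real)
                   \<Rightarrow> real \<Rightarrow> nat \<Rightarrow> real \<Rightarrow> ereal" where
  "thr n m X L s \<gamma> j l =
     (let A = {t \<in> scoreset n m X s. FR n m X L s j t l \<le> \<gamma>}
      in if A = {} then -\<infinity> else ereal (Max A))"

text \<open>E_{gamma,n+j}(l); ratio 0 when the numerator is 0\<close>
definition Eell :: "nat \<Rightarrow> nat \<Rightarrow> (nat \<Rightarrow> 'x) \<Rightarrow> (nat \<Rightarrow> real) \<Rightarrow> ('x \<Rightarrow> real)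
                   \<Rightarrow> real \<Rightarrow> nat \<Rightarrow> real \<Rightarrow> real" where
  "Eell n m X L s \<gamma> j l =
     (let T = thr n m X L s \<gamma> j l
      in if ereal (s (X (n+j))) \<le> T
         then real (n+1) / (l * ind (ereal (s (X (n+j))) \<le> T)
                            + (\<Sum>i=1..n. L i * ind (ereal (s (X i)) \<le> T)))
         else 0)"

definition Eval :: "nat \<Rightarrow> nat \<Rightarrow> (nat \<Rightarrow> 'x) \<Rightarrow> (nat \<Rightarrow> real) \<Rightarrow> ('x \<Rightarrow> real)
                   \<Rightarrow> real \<Rightarrow> nat \<Rightarrow> real" where
  "Eval n m X L s \<gamma> j =
     (if (INF l\<in>{0..1::real}. thr n m X L s \<gamma> j l) = -\<infinity> then 0
      else (INF l\<in>{0..1::real}. Eell n m X L s \<gamma> j l))"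

text \<open>Nonconformity score V(x,y) = infinity * 1{y > c} + s(x), with infinity * 0 = 0\<close>
definition Vscore :: "('x \<Rightarrow> real) \<Rightarrow> real \<Rightarrow> 'x \<Rightarrow> real \<Rightarrow> ereal" where
  "Vscore s c x y = (if y > c then \<infinity> else 0) + ereal (s x)"

definition pval :: "nat \<Rightarrow> (nat \<Rightarrow> 'x) \<Rightarrow> (nat \<Rightarrow> real) \<Rightarrow> ('x \<Rightarrow> real) \<Rightarrow> real
                   \<Rightarrow> nat \<Rightarrow> real" where
  "pval n X Y s c j =
     (1 + real (card {i\<in>{1..n}. Vscore s c (X i) (Y i) \<le> Vscore s c (X (n+j)) c}))
     / real (n+1)"

definition BH_kstar :: "real \<Rightarrow> nat \<Rightarrow> (nat \<Rightarrow> real) \<Rightarrow> nat" where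
  "BH_kstar \<alpha> m p =
     (let ps = sort (map p [1..<m+1]);
          K = {k\<in>{1..m}. ps ! (k-1) \<le> \<alpha> * real k / real m}
      in if K = {} then 0 else Max K)"

definition BH_sel :: "real \<Rightarrow> nat \<Rightarrow> (nat \<Rightarrow> real) \<Rightarrow> nat set" where
  "BH_sel \<alpha> m p = {j\<in>{1..m}. p j \<le> \<alpha> * real (BH_kstar \<alpha> m p) / real m}"

definition eBH :: "real \<Rightarrow> nat \<Rightarrow> (nat \<Rightarrow> real) \<Rightarrow> nat \<Rightarrow> real" where
  "eBH \<alpha> m p j =
     (let r = \<alpha> * real (card (BH_sel \<alpha> m p)) / real m
      in if p j \<le> r then 1 / r else 0)"

end

theory Submission
  imports Defs
begin

text \<open>
  With the binary risk, the conformal p-value of test point k is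
  p_k = (1 + a(s_k)) / (n+1), where a(t) counts the calibration points with
  Y_i \<le> c and score at most t, and for s_j \<le> t the condition FR_{n+j}(t;1) \<le> \<alpha>
  reads 1 + a(t) \<le> \<alpha> (n+1) N(t) / m, with N(t) the number of test scores at most t.
  Hence every test point with score at most an admissible t has p-value at most
  \<alpha> N(t) / m, and the step-up property of BH rejects all of them; conversely the
  largest score among the BH rejections is admissible.  So j is rejected by BH
  iff s_j \<le> t_{\<alpha>,n+j}(1), and then R = |S^CS| \<ge> N(t), whence
  E_{\<alpha>,n+j}(1) = (n+1)/(1 + a(t)) \<ge> m/(\<alpha> N(t)) \<ge> m/(\<alpha> R) = e_{n+j}.  If j is not
  rejected, both e_{n+j} and E_{\<alpha>,n+j}(1) vanish, hence so does the infimum.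
\<close>

lemma sorted_nth_le_iff_length_filter:
  fixes xs :: "'a::linorder list"
  assumes "sorted xs" and "k < length xs"
  shows "xs ! k \<le> x \<longleftrightarrow> k < length (filter (\<lambda>y. y \<le> x) xs)"
proof
  assume le: "xs ! k \<le> x"
  have "{0..k} \<subseteq> {i. i < length xs \<and> xs ! i \<le> x}"
    using assms le by (auto intro: order_trans[OF sorted_nth_mono])
  then have "card {0..k} \<le> card {i. i < length xs \<and> xs ! i \<le> x}"
    by (intro card_mono) auto
  then show "k < length (filter (\<lambda>y. y \<le> x) xs)"
    by (simp add: length_filter_conv_card)
next
  assume k: "k < length (filter (\<lambda>y. y \<le> x) xs)"
  show "xs ! k \<le> x"
  proof (rule ccontr)
    assume "\<not> xs ! k \<le> x"
    have "i < k" if "i < length xs" and "xs ! i \<le> x" for i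
      using that assms \<open>\<not> xs ! k \<le> x\<close> sorted_nth_mono[OF assms(1), of k i]
      by (meson dual_order.trans not_le)
    then have "{i. i < length xs \<and> xs ! i \<le> x} \<subseteq> {0..<k}"
      by auto
    then have "card {i. i < length xs \<and> xs ! i \<le> x} \<le> k"
      using card_mono[of "{0..<k}"] by fastforce
    then show False
      using k by (simp add: length_filter_conv_card)
  qed
qed

lemma length_filter_le_sort_map:
  "length (filter (\<lambda>y. y \<le> x) (sort (map (p :: nat \<Rightarrow> real) [1..<m+1])))
     = card {k \<in> {1..m}. p k \<le> x}"
proof -
  have "length (filter (\<lambda>y. y \<le> x) (sort (map p [1..<m+1])))
      = length (filter (\<lambda>k. p k \<le> x) [1..<m+1])"
    by (simp add: filter_sort filter_map comp_def del: upt_Suc)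
  also have "\<dots> = card {k \<in> {1..m}. p k \<le> x}"
    by (subst distinct_length_filter) (auto intro: arg_cong[where f = card])
  finally show ?thesis .
qed

lemma sorted_pvals_nth_le_iff:
  assumes "k \<in> {1..m}"
  shows "sort (map (p :: nat \<Rightarrow> real) [1..<m+1]) ! (k - 1) \<le> x
           \<longleftrightarrow> k \<le> card {i \<in> {1..m}. p i \<le> x}"
proof -
  let ?ps = "sort (map p [1..<m+1])"
  have "k - 1 < length ?ps"
    using assms by auto
  then have "?ps ! (k - 1) \<le> x \<longleftrightarrow> k - 1 < length (filter (\<lambda>y. y \<le> x) ?ps)"
    by (intro sorted_nth_le_iff_length_filter) simp_all
  then show ?thesis
    unfolding length_filter_le_sort_map using assms by auto
qed

lemma le_BH_kstar:
  assumes "k \<in> {1..m}" and "k \<le> card {i \<in> {1..m}. p i \<le> \<alpha> * real k / real m}"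
  shows "k \<le> BH_kstar \<alpha> m p"
proof -
  let ?K = "{k \<in> {1..m}. sort (map p [1..<m+1]) ! (k - 1) \<le> \<alpha> * real k / real m}"
  have "k \<in> ?K"
    using assms sorted_pvals_nth_le_iff[OF assms(1)] by auto
  then show ?thesis
    unfolding BH_kstar_def Let_def by (auto intro: Max_ge)
qed

lemma BH_kstar_le_card_BH_sel: "BH_kstar \<alpha> m p \<le> card (BH_sel \<alpha> m p)"
proof (cases "BH_kstar \<alpha> m p = 0")
  case False
  let ?K = "{k \<in> {1..m}. sort (map p [1..<m+1]) ! (k - 1) \<le> \<alpha> * real k / real m}"
  have kstar: "BH_kstar \<alpha> m p = (if ?K = {} then 0 else Max ?K)"
    unfolding BH_kstar_def Let_def ..
  with False have "?K \<noteq> {}"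
    by argo
  then have "Max ?K \<in> ?K"
    by (intro Max_in) simp_all
  with kstar \<open>?K \<noteq> {}\<close> have "BH_kstar \<alpha> m p \<in> ?K"
    by simp
  then have "BH_kstar \<alpha> m p \<le> card {i \<in> {1..m}. p i \<le> \<alpha> * real (BH_kstar \<alpha> m p) / real m}"
    using sorted_pvals_nth_le_iff[of "BH_kstar \<alpha> m p" m p] by blast
  then show ?thesis
    unfolding BH_sel_def .
qed simp

lemma card_BH_sel:
  assumes "0 \<le> \<alpha>"
  shows "card (BH_sel \<alpha> m p) = BH_kstar \<alpha> m p"
proof (rule antisym[OF _ BH_kstar_le_card_BH_sel])
  let ?R = "card (BH_sel \<alpha> m p)"
  show "?R \<le> BH_kstar \<alpha> m p"
  proof (cases "?R = 0")
    case False
    have "BH_sel \<alpha> m p \<subseteq> {1..m}"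
      by (auto simp: BH_sel_def)
    then have R: "?R \<in> {1..m}"
      using False card_mono[of "{1..m}" "BH_sel \<alpha> m p"] by auto
    have "\<alpha> * real (BH_kstar \<alpha> m p) / real m \<le> \<alpha> * real ?R / real m"
      using BH_kstar_le_card_BH_sel assms by (intro divide_right_mono mult_left_mono) auto
    then have "BH_sel \<alpha> m p \<subseteq> {i \<in> {1..m}. p i \<le> \<alpha> * real ?R / real m}"
      unfolding BH_sel_def by auto
    then have "?R \<le> card {i \<in> {1..m}. p i \<le> \<alpha> * real ?R / real m}"
      by (intro card_mono) auto
    with R show ?thesis
      by (rule le_BH_kstar)
  qed simp
qed

lemma mem_BH_sel_iff:
  assumes "0 \<le> \<alpha>"
  shows "j \<in> BH_sel \<alpha> m p \<longleftrightarrow> j \<in> {1..m} \<and> p j \<le> \<alpha> * real (card (BH_sel \<alpha> m p)) / real m"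
  using card_BH_sel[OF assms] by (simp add: BH_sel_def)

lemma BH_sel_step_up:
  assumes "0 \<le> \<alpha>" and "1 \<le> k" and "k \<le> card {i \<in> {1..m}. p i \<le> \<alpha> * real k / real m}"
  shows "{i \<in> {1..m}. p i \<le> \<alpha> * real k / real m} \<subseteq> BH_sel \<alpha> m p"
proof -
  have "card {i \<in> {1..m}. p i \<le> \<alpha> * real k / real m} \<le> card {1..m}"
    by (intro card_mono) auto
  then have "k \<le> BH_kstar \<alpha> m p"
    using assms by (intro le_BH_kstar) auto
  then have "\<alpha> * real k / real m \<le> \<alpha> * real (BH_kstar \<alpha> m p) / real m"
    using assms(1) by (intro divide_right_mono mult_left_mono) auto
  then show ?thesis
    unfolding BH_sel_def by auto
qed

lemma eBH_eq:
  assumes "0 \<le> \<alpha>" and "j \<in> {1..m}"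
  shows "eBH \<alpha> m p j
           = (if j \<in> BH_sel \<alpha> m p then real m / (\<alpha> * real (card (BH_sel \<alpha> m p))) else 0)"
  using assms by (simp add: eBH_def mem_BH_sel_iff)

definition cal_mass :: "nat \<Rightarrow> (nat \<Rightarrow> 'x) \<Rightarrow> (nat \<Rightarrow> real) \<Rightarrow> ('x \<Rightarrow> real) \<Rightarrow> real \<Rightarrow> real" where
  "cal_mass n X L s t = (\<Sum>i=1..n. L i * ind (s (X i) \<le> t))"

definition test_count :: "nat \<Rightarrow> nat \<Rightarrow> (nat \<Rightarrow> 'x) \<Rightarrow> ('x \<Rightarrow> real) \<Rightarrow> real \<Rightarrow> nat" where
  "test_count n m X s t = card {k \<in> {1..m}. s (X (n+k)) \<le> t}"

lemma sum_ind_eq_card: "finite A \<Longrightarrow> (\<Sum>i\<in>A. ind (P i)) = real (card {i \<in> A. P i})"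
  by (simp add: ind_def sum.If_cases Int_def)

lemma cal_mass_nonneg: "(\<And>i. 0 \<le> L i) \<Longrightarrow> 0 \<le> cal_mass n X L s t"
  unfolding cal_mass_def by (intro sum_nonneg) (simp add: ind_def)

lemma cal_mass_mono:
  assumes "t \<le> t'" and "\<And>i. 0 \<le> L i"
  shows "cal_mass n X L s t \<le> cal_mass n X L s t'"
  unfolding cal_mass_def using assms by (intro sum_mono mult_left_mono) (auto simp: ind_def)

lemma pval_eq_cal_mass:
  "pval n X Y s c k = (1 + cal_mass n X (\<lambda>i. ind (Y i \<le> c)) s (s (X (n+k)))) / real (n+1)"
proof -
  have "{i \<in> {1..n}. Vscore s c (X i) (Y i) \<le> Vscore s c (X (n+k)) c}
      = {i \<in> {1..n}. Y i \<le> c \<and> s (X i) \<le> s (X (n+k))}"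
    by (auto simp: Vscore_def)
  moreover have "cal_mass n X (\<lambda>i. ind (Y i \<le> c)) s (s (X (n+k)))
      = (\<Sum>i=1..n. ind (Y i \<le> c \<and> s (X i) \<le> s (X (n+k))))"
    unfolding cal_mass_def by (intro sum.cong) (auto simp: ind_def)
  ultimately show ?thesis
    unfolding pval_def by (simp add: sum_ind_eq_card)
qed

lemma test_count_pos:
  assumes "j \<in> {1..m}" and "s (X (n+j)) \<le> t"
  shows "0 < test_count n m X s t"
  unfolding test_count_def using assms by (auto simp: card_gt_0_iff)

lemma FR_one_le_iff:
  assumes "j \<in> {1..m}" and "s (X (n+j)) \<le> t"
  shows "FR n m X L s j t 1 \<le> \<gamma>
           \<longleftrightarrow> (1 + cal_mass n X L s t) * real m \<le> \<gamma> * real (n+1) * real (test_count n m X s t)"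
proof -
  have "{k \<in> {1..m}. s (X (n+k)) \<le> t} = insert j {k \<in> {1..m}. k \<noteq> j \<and> s (X (n+k)) \<le> t}"
    using assms by auto
  then have "test_count n m X s t = Suc (card {k \<in> {1..m}. k \<noteq> j \<and> s (X (n+k)) \<le> t})"
    unfolding test_count_def by simp
  then have "FR n m X L s j t 1
      = (1 + cal_mass n X L s t) * real m / (real (n+1) * real (test_count n m X s t))"
    unfolding FR_def cal_mass_def using assms by (simp add: ind_def)
  moreover have "0 < real (n+1) * real (test_count n m X s t)"
    using test_count_pos[of j m s X n t] assms by simp
  ultimately show ?thesis
    by (simp add: pos_divide_le_eq mult.commute mult.assoc)
qed

lemma thr_attained:
  assumes "thr n m X L s \<gamma> j l \<noteq> -\<infinity>"
  obtains t where "thr n m X L s \<gamma> j l = ereal t"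
    and "t \<in> scoreset n m X s" and "FR n m X L s j t l \<le> \<gamma>"
proof -
  let ?A = "{t \<in> scoreset n m X s. FR n m X L s j t l \<le> \<gamma>}"
  have "finite ?A"
    unfolding scoreset_def by simp
  moreover have "?A \<noteq> {}" and "thr n m X L s \<gamma> j l = ereal (Max ?A)"
    using assms unfolding thr_def Let_def by (auto split: if_splits)
  ultimately show ?thesis
    using Max_in that by blast
qed

lemma le_thr:
  assumes "t \<in> scoreset n m X s" and "FR n m X L s j t l \<le> \<gamma>"
  shows "ereal t \<le> thr n m X L s \<gamma> j l"
proof -
  let ?A = "{t \<in> scoreset n m X s. FR n m X L s j t l \<le> \<gamma>}"
  have "finite ?A"
    unfolding scoreset_def by simp
  then show ?thesis
    using assms unfolding thr_def Let_def by auto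
qed

lemma Eell_eq:
  assumes "thr n m X L s \<gamma> j l = ereal t" and "s (X (n+j)) \<le> t"
  shows "Eell n m X L s \<gamma> j l = real (n+1) / (l + cal_mass n X L s t)"
  using assms unfolding Eell_def cal_mass_def by (simp add: ind_def)

lemma Eell_nonneg:
  assumes "0 \<le> l" and "\<And>i. 0 \<le> L i"
  shows "0 \<le> Eell n m X L s \<gamma> j l"
  unfolding Eell_def Let_def using assms
  by (auto intro!: divide_nonneg_nonneg add_nonneg_nonneg sum_nonneg simp: ind_def)

lemma Eval_eq_0_if_Eell_one_eq_0:
  assumes "Eell n m X L s \<gamma> j 1 = 0" and "\<And>i. 0 \<le> L i"
  shows "Eval n m X L s \<gamma> j = 0"
proof -
  have "(INF l\<in>{0..1::real}. Eell n m X L s \<gamma> j l) = 0"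
  proof (rule antisym)
    have "(INF l\<in>{0..1::real}. Eell n m X L s \<gamma> j l) \<le> Eell n m X L s \<gamma> j 1"
      using assms by (intro cINF_lower) (auto intro!: bdd_belowI2[where m = 0] Eell_nonneg)
    then show "(INF l\<in>{0..1::real}. Eell n m X L s \<gamma> j l) \<le> 0"
      using assms(1) by simp
    show "0 \<le> (INF l\<in>{0..1::real}. Eell n m X L s \<gamma> j l)"
      using assms by (auto intro!: cINF_greatest Eell_nonneg)
  qed
  then show ?thesis
    unfolding Eval_def by simp
qed

lemma selected_if_FR_le:
  fixes \<alpha> :: real
  assumes "0 \<le> \<alpha>" and j: "j \<in> {1..m}" and sj: "s (X (n+j)) \<le> t"
    and FR: "FR n m X (\<lambda>i. ind (Y i \<le> c)) s j t 1 \<le> \<alpha>"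
  shows "j \<in> BH_sel \<alpha> m (pval n X Y s c)"
    and "test_count n m X s t \<le> card (BH_sel \<alpha> m (pval n X Y s c))"
proof -
  let ?L = "\<lambda>i. ind (Y i \<le> c)" and ?p = "pval n X Y s c" and ?N = "test_count n m X s t"
  let ?Q = "{i \<in> {1..m}. ?p i \<le> \<alpha> * real ?N / real m}"
  have mass: "(1 + cal_mass n X ?L s t) * real m \<le> \<alpha> * real (n+1) * real ?N"
    using FR FR_one_le_iff[of j m s X n t] j sj by blast
  have "0 < real m"
    using j by simp
  have below_t: "{k \<in> {1..m}. s (X (n+k)) \<le> t} \<subseteq> ?Q"
  proof safe
    fix k assume k: "k \<in> {1..m}" "s (X (n+k)) \<le> t"
    have "?p k \<le> (1 + cal_mass n X ?L s t) / real (n+1)"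
      unfolding pval_eq_cal_mass using k(2)
      by (intro divide_right_mono add_left_mono cal_mass_mono) (auto simp: ind_def)
    also have "\<dots> \<le> \<alpha> * real ?N / real m"
      using mass \<open>0 < real m\<close> by (simp add: field_simps)
    finally show "?p k \<le> \<alpha> * real ?N / real m" .
  qed
  then have "?N \<le> card ?Q"
    unfolding test_count_def by (intro card_mono) auto
  moreover have "?Q \<subseteq> BH_sel \<alpha> m ?p"
    using test_count_pos[of j m s X n t] j sj \<open>?N \<le> card ?Q\<close> \<open>0 \<le> \<alpha>\<close>
    by (intro BH_sel_step_up) auto
  ultimately show "?N \<le> card (BH_sel \<alpha> m ?p)"
    using card_mono[of "BH_sel \<alpha> m ?p" ?Q] by (auto simp: BH_sel_def)
  show "j \<in> BH_sel \<alpha> m ?p"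
    using below_t \<open>?Q \<subseteq> BH_sel \<alpha> m ?p\<close> j sj by blast
qed

lemma FR_le_at_max_selected_score:
  fixes \<alpha> :: real
  assumes "0 \<le> \<alpha>" and j: "j \<in> BH_sel \<alpha> m (pval n X Y s c)"
  obtains t where "t \<in> scoreset n m X s" and "s (X (n+j)) \<le> t"
    and "FR n m X (\<lambda>i. ind (Y i \<le> c)) s j t 1 \<le> \<alpha>"
proof -
  let ?L = "\<lambda>i. ind (Y i \<le> c)" and ?p = "pval n X Y s c"
  let ?S = "BH_sel \<alpha> m ?p"
  have S_sub: "?S \<subseteq> {1..m}" and "finite ?S"
    by (auto simp: BH_sel_def)
  define t where "t = Max ((\<lambda>k. s (X (n+k))) ` ?S)"
  have le_t: "s (X (n+k)) \<le> t" if "k \<in> ?S" for k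
    unfolding t_def using that \<open>finite ?S\<close> by (intro Max_ge) auto
  have "t \<in> (\<lambda>k. s (X (n+k))) ` ?S"
    unfolding t_def using j \<open>finite ?S\<close> by (intro Max_in) auto
  then obtain k0 where k0: "k0 \<in> ?S" and t_eq: "t = s (X (n+k0))"
    by blast
  have jm: "j \<in> {1..m}"
    using j S_sub by blast
  have "t \<in> scoreset n m X s"
    unfolding scoreset_def t_eq using k0 S_sub by (auto intro!: image_eqI[where x = "n+k0"])
  moreover have sj: "s (X (n+j)) \<le> t"
    using le_t j .
  moreover have "(1 + cal_mass n X ?L s t) * real m \<le> \<alpha> * real (n+1) * real (test_count n m X s t)"
  proof -
    have "card ?S \<le> test_count n m X s t"
      unfolding test_count_def using S_sub le_t by (intro card_mono) auto
    have "1 + cal_mass n X ?L s t = real (n+1) * ?p k0"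
      unfolding pval_eq_cal_mass t_eq by simp
    also have "\<dots> \<le> real (n+1) * (\<alpha> * real (card ?S) / real m)"
      using k0 mem_BH_sel_iff[OF \<open>0 \<le> \<alpha>\<close>] by (intro mult_left_mono) auto
    also have "\<dots> \<le> real (n+1) * (\<alpha> * real (test_count n m X s t) / real m)"
      using \<open>card ?S \<le> test_count n m X s t\<close> \<open>0 \<le> \<alpha>\<close>
      by (intro mult_left_mono divide_right_mono) auto
    finally show ?thesis
      using jm by (simp add: field_simps)
  qed
  then have "FR n m X ?L s j t 1 \<le> \<alpha>"
    using FR_one_le_iff[of j m s X n t] jm sj by blast
  ultimately show ?thesis
    using that by blast
qed

lemma mem_BH_sel_iff_le_thr:
  fixes \<alpha> :: real
  assumes "0 \<le> \<alpha>" and "j \<in> {1..m}"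
  shows "j \<in> BH_sel \<alpha> m (pval n X Y s c)
           \<longleftrightarrow> ereal (s (X (n+j))) \<le> thr n m X (\<lambda>i. ind (Y i \<le> c)) s \<alpha> j 1"
proof
  assume "j \<in> BH_sel \<alpha> m (pval n X Y s c)"
  then obtain t where tM: "t \<in> scoreset n m X s" and sj: "s (X (n+j)) \<le> t"
    and FR: "FR n m X (\<lambda>i. ind (Y i \<le> c)) s j t 1 \<le> \<alpha>"
    using FR_le_at_max_selected_score assms(1) by blast
  from tM FR have "ereal t \<le> thr n m X (\<lambda>i. ind (Y i \<le> c)) s \<alpha> j 1"
    by (rule le_thr)
  moreover have "ereal (s (X (n+j))) \<le> ereal t"
    using sj by simp
  ultimately show "ereal (s (X (n+j))) \<le> thr n m X (\<lambda>i. ind (Y i \<le> c)) s \<alpha> j 1"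
    by (rule order_trans[rotated])
next
  assume le: "ereal (s (X (n+j))) \<le> thr n m X (\<lambda>i. ind (Y i \<le> c)) s \<alpha> j 1"
  then have "thr n m X (\<lambda>i. ind (Y i \<le> c)) s \<alpha> j 1 \<noteq> -\<infinity>"
    by auto
  then obtain t where thr: "thr n m X (\<lambda>i. ind (Y i \<le> c)) s \<alpha> j 1 = ereal t"
    and FR: "FR n m X (\<lambda>i. ind (Y i \<le> c)) s j t 1 \<le> \<alpha>"
    by (rule thr_attained)
  have "s (X (n+j)) \<le> t"
    using le thr by simp
  with assms FR show "j \<in> BH_sel \<alpha> m (pval n X Y s c)"
    by (intro selected_if_FR_le(1))
qed

lemma eBH_le_Eell_one:
  fixes \<alpha> :: real
  assumes "0 < \<alpha>" and sel: "j \<in> BH_sel \<alpha> m (pval n X Y s c)"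
  shows "eBH \<alpha> m (pval n X Y s c) j \<le> Eell n m X (\<lambda>i. ind (Y i \<le> c)) s \<alpha> j 1"
proof -
  let ?L = "\<lambda>i. ind (Y i \<le> c)" and ?S = "BH_sel \<alpha> m (pval n X Y s c)"
  have j: "j \<in> {1..m}"
    using sel by (simp add: BH_sel_def)
  have le: "ereal (s (X (n+j))) \<le> thr n m X ?L s \<alpha> j 1"
    using mem_BH_sel_iff_le_thr[of \<alpha> j m n X Y s c] assms j by simp
  then have "thr n m X ?L s \<alpha> j 1 \<noteq> -\<infinity>"
    by auto
  then obtain t where thr: "thr n m X ?L s \<alpha> j 1 = ereal t"
    and FR: "FR n m X ?L s j t 1 \<le> \<alpha>"
    by (rule thr_attained)
  have sj: "s (X (n+j)) \<le> t"
    using le thr by simp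
  let ?N = "test_count n m X s t" and ?a = "cal_mass n X ?L s t"
  have "0 < ?N"
    using test_count_pos[of j m s X n t] j sj by simp
  have "0 \<le> ?a"
    by (rule cal_mass_nonneg) (simp add: ind_def)
  have "eBH \<alpha> m (pval n X Y s c) j = real m / (\<alpha> * real (card ?S))"
    using eBH_eq[of \<alpha> j m] assms j by simp
  also have "\<dots> \<le> real m / (\<alpha> * real ?N)"
    using selected_if_FR_le(2)[of \<alpha> j m s X n t Y c] assms j sj FR \<open>0 < ?N\<close>
    by (intro divide_left_mono mult_left_mono) auto
  also have "\<dots> \<le> real (n+1) / (1 + ?a)"
  proof -
    have "(1 + ?a) * real m \<le> \<alpha> * real (n+1) * real ?N"
      using FR FR_one_le_iff[of j m s X n t] j sj by blast
    then show ?thesis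
      using \<open>0 < ?N\<close> \<open>0 \<le> ?a\<close> assms(1) by (simp add: frac_le_eq field_simps)
  qed
  also have "\<dots> = Eell n m X ?L s \<alpha> j 1"
    using Eell_eq[OF thr sj] by simp
  finally show ?thesis .
qed

theorem proposition5p2:
  fixes n m :: nat and X :: "nat \<Rightarrow> 'x" and Y :: "nat \<Rightarrow> real"
    and s :: "'x \<Rightarrow> real" and c \<alpha> :: real
  assumes s_range: "\<forall>x. 0 \<le> s x \<and> s x \<le> 1"
    and alpha_pos: "0 < \<alpha>" and alpha_lt1: "\<alpha> < 1"
  shows "\<forall>j\<in>{1..m}.
           Eell n m X (\<lambda>i. ind (Y i \<le> c)) s \<alpha> j 1 \<ge> eBH \<alpha> m (pval n X Y s c) j
         \<and> (eBH \<alpha> m (pval n X Y s c) j = 0 \<longrightarrow> Eval n m X (\<lambda>i. ind (Y i \<le> c)) s \<alpha> j = 0)"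
proof
  fix j assume j: "j \<in> {1..m}"
  let ?L = "\<lambda>i. ind (Y i \<le> c)" and ?p = "pval n X Y s c"
  let ?S = "BH_sel \<alpha> m ?p"
  show "Eell n m X ?L s \<alpha> j 1 \<ge> eBH \<alpha> m ?p j
        \<and> (eBH \<alpha> m ?p j = 0 \<longrightarrow> Eval n m X ?L s \<alpha> j = 0)"
  proof (cases "j \<in> ?S")
    case True
    have "0 < card ?S"
      using True by (auto simp: card_gt_0_iff BH_sel_def)
    then have "eBH \<alpha> m ?p j \<noteq> 0"
      using eBH_eq[of \<alpha> j m ?p] alpha_pos j True by simp
    with eBH_le_Eell_one[OF alpha_pos True] show ?thesis
      by simp
  next
    case False
    then have "eBH \<alpha> m ?p j = 0"
      using eBH_eq[of \<alpha> j m ?p] alpha_pos j by simp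
    moreover have "\<not> ereal (s (X (n+j))) \<le> thr n m X ?L s \<alpha> j 1"
      using False mem_BH_sel_iff_le_thr[of \<alpha> j m n X Y s c] alpha_pos j by simp
    then have "Eell n m X ?L s \<alpha> j 1 = 0"
      unfolding Eell_def Let_def by simp
    ultimately show ?thesis
      using Eval_eq_0_if_Eell_one_eq_0[of n m X ?L s \<alpha> j] by (simp add: ind_def)
  qed
qed

end
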